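(* Let $R$ be a ring with identity, ${}_RM$ a finitely generated semisimple left $R$-module and $\varphi:M\to M$ a nilpotent $R$-endomorphism. Then the centralizer $C_\varphi=\{\psi\in\mathrm{Hom}_R(M,M)\mid\psi\circ\varphi=\varphi\circ\psi\}$, as a $Z(R)$-submodule of $\mathrm{Hom}_R(M,M)$, is a homomorphic image (as $Z(R)$-modules) of some $Z(R)$-submodule of a certain left $R$-submodule of $M_{m\times m}(R[t])$ generated by $md$ elements, where $d=\dim_R(M)$ and $m=\dim_R(\ker(\varphi))$.
   Context: $Z(R)$ is the centre of $R$, $R[t]$ the polynomial ring in a commuting indeterminate $t$, and $\dim_R$ denotes composition length. *)

theory Defs
  imports "HOL-Computational_Algebra.Polynomial" "HOL-Library.Function_Algebras"
begin

text \<open>Left modules over a (not necessarily commutative) ring 'r, given by a scalar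
action on an abelian group type.  The whole type 'm plays the role of the module M.\<close>

definition left_module :: "('r::ring_1 \<Rightarrow> 'm::ab_group_add \<Rightarrow> 'm) \<Rightarrow> bool" where
  "left_module smul \<longleftrightarrow>
     (\<forall>r x y. smul r (x + y) = smul r x + smul r y) \<and>
     (\<forall>r s x. smul (r + s) x = smul r x + smul s x) \<and>
     (\<forall>r s x. smul (r * s) x = smul r (smul s x)) \<and>
     (\<forall>x. smul 1 x = x)"

text \<open>N is a submodule w.r.t. scalars from S (contains 0, closed under + and
scalar multiplication by elements of S; closure under negation follows since
-1 is a scalar in all uses below).\<close>
definition is_submod :: "('s \<Rightarrow> 'v::ab_group_add \<Rightarrow> 'v) \<Rightarrow> 's set \<Rightarrow> 'v set \<Rightarrow> bool" where
  "is_submod act S N \<longleftrightarrow> 0 \<in> N \<and> (\<forall>x\<in>N. \<forall>y\<in>N. x + y \<in> N) \<and> (\<forall>s\<in>S. \<forall>x\<in>N. act s x \<in> N)"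

definition span :: "('s \<Rightarrow> 'v::ab_group_add \<Rightarrow> 'v) \<Rightarrow> 's set \<Rightarrow> 'v set \<Rightarrow> 'v set" where
  "span act S X = \<Inter>{N. is_submod act S N \<and> X \<subseteq> N}"

definition fin_gen :: "('r::ring_1 \<Rightarrow> 'm::ab_group_add \<Rightarrow> 'm) \<Rightarrow> bool" where
  "fin_gen smul \<longleftrightarrow> (\<exists>G. finite G \<and> span smul UNIV G = UNIV)"

definition simple_submod :: "('r::ring_1 \<Rightarrow> 'm::ab_group_add \<Rightarrow> 'm) \<Rightarrow> 'm set \<Rightarrow> bool" where
  "simple_submod smul N \<longleftrightarrow> is_submod smul UNIV N \<and> N \<noteq> {0} \<and>
     (\<forall>K. is_submod smul UNIV K \<and> K \<subseteq> N \<longrightarrow> K = {0} \<or> K = N)"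

definition semisimple :: "('r::ring_1 \<Rightarrow> 'm::ab_group_add \<Rightarrow> 'm) \<Rightarrow> bool" where
  "semisimple smul \<longleftrightarrow> span smul UNIV (\<Union>{N. simple_submod smul N}) = UNIV"

definition mod_length :: "('r::ring_1 \<Rightarrow> 'm::ab_group_add \<Rightarrow> 'm) \<Rightarrow> 'm set \<Rightarrow> nat" where
  "mod_length smul N = Sup {n. \<exists>c::nat \<Rightarrow> 'm set. c 0 = {0} \<and> c n = N \<and>
      (\<forall>i\<le>n. is_submod smul UNIV (c i)) \<and> (\<forall>i<n. c i \<subset> c (Suc i))}"

definition is_endo :: "('r::ring_1 \<Rightarrow> 'm::ab_group_add \<Rightarrow> 'm) \<Rightarrow> ('m \<Rightarrow> 'm) \<Rightarrow> bool" where
  "is_endo smul f \<longleftrightarrow> (\<forall>x y. f (x + y) = f x + f y) \<and> (\<forall>r x. f (smul r x) = smul r (f x))"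

definition centralizer :: "('r::ring_1 \<Rightarrow> 'm::ab_group_add \<Rightarrow> 'm) \<Rightarrow> ('m \<Rightarrow> 'm) \<Rightarrow> ('m \<Rightarrow> 'm) set" where
  "centralizer smul \<phi> = {\<psi>. is_endo smul \<psi> \<and> \<psi> \<circ> \<phi> = \<phi> \<circ> \<psi>}"

definition ring_center :: "'r::ring_1 set" where
  "ring_center = {z. \<forall>r. z * r = r * z}"

definition hom_smul :: "('r \<Rightarrow> 'm \<Rightarrow> 'm) \<Rightarrow> 'r \<Rightarrow> ('m \<Rightarrow> 'm) \<Rightarrow> ('m \<Rightarrow> 'm)" where
  "hom_smul smul z \<psi> = (\<lambda>x. smul z (\<psi> x))"

text \<open>m x m matrices over R[t], as functions nat => nat => 'r poly vanishing outside
{0..<m} x {0..<m}, with the left R-action by coefficientwise left multiplication.\<close>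
definition poly_mats :: "nat \<Rightarrow> (nat \<Rightarrow> nat \<Rightarrow> 'r::ring_1 poly) set" where
  "poly_mats m = {A. \<forall>i j. (m \<le> i \<or> m \<le> j) \<longrightarrow> A i j = 0}"

definition mat_smul :: "'r::ring_1 \<Rightarrow> (nat \<Rightarrow> nat \<Rightarrow> 'r poly) \<Rightarrow> (nat \<Rightarrow> nat \<Rightarrow> 'r poly)" where
  "mat_smul r A = (\<lambda>i j. map_poly (\<lambda>a. r * a) (A i j))"

end

theory Submission
  imports Defs "HOL-Library.Set_Algebras"
begin

text \<open>A centralising \<open>\<psi>\<close> is determined by its values on any list \<open>U\<close> with
\<open>M = \<phi>(M) + span U\<close>: the set where two such maps agree is a \<open>\<phi>\<close>-stable submodule containing
\<open>U\<close>, and nilpotency of \<open>\<phi>\<close> forces it to be all of \<open>M\<close>. Writing \<open>M\<close> as an irredundant sum of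
\<open>d\<close> simple submodules gives \<open>d\<close> generators \<open>h\<^sub>i\<close>; choosing \<open>U\<close> greedily modulo \<open>\<phi>(M)\<close> and
splitting a maximal chain of \<open>M\<close> through \<open>ker \<phi>\<close> and \<open>im \<phi>\<close> shows \<open>|U| \<le> m\<close>. Recording the
coordinates of \<open>\<psi>(u\<^sub>j)\<close> along the \<open>h\<^sub>i\<close> as the coefficients of \<open>t\<^sup>i\<close> in entry \<open>(j,0)\<close> of an
\<open>m \<times> m\<close> matrix over \<open>R[t]\<close> gives a \<open>Z(R)\<close>-linear relation between the span of the \<open>md\<close>
matrices \<open>t\<^sup>i E\<^sub>j\<^sub>0\<close> and \<open>C\<^sub>\<phi>\<close> that is functional and total on \<open>C\<^sub>\<phi>\<close>, so its domain maps
onto \<open>C\<^sub>\<phi>\<close>.\<close>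

lemma is_submod_sum:
  assumes "is_submod act S N" "\<And>i. i \<in> A \<Longrightarrow> f i \<in> N"
  shows "sum f A \<in> N"
  using assms unfolding is_submod_def by (induction A rule: infinite_finite_induct) auto

lemma span_is_submod: "is_submod act S (span act S X)"
  unfolding span_def is_submod_def by auto

lemma span_superset: "X \<subseteq> span act S X"
  unfolding span_def by auto

lemma span_minimal: "is_submod act S N \<Longrightarrow> X \<subseteq> N \<Longrightarrow> span act S X \<subseteq> N"
  unfolding span_def by auto

lemma span_mono: "X \<subseteq> Y \<Longrightarrow> span act S X \<subseteq> span act S Y"
  using span_minimal[OF span_is_submod] span_superset by (metis subset_trans)

lemma is_submod_subset_scalars: "is_submod act S N \<Longrightarrow> S' \<subseteq> S \<Longrightarrow> is_submod act S' N"
  unfolding is_submod_def by blast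

lemma linear_relation_image:
  fixes P :: "'a::ab_group_add \<Rightarrow> 'b::ab_group_add \<Rightarrow> bool"
  assumes V: "is_submod act S V" and C: "is_submod act' S C"
    and P_zero: "P 0 0"
    and P_add: "\<And>x x' y y'. P x y \<Longrightarrow> P x' y' \<Longrightarrow> P (x + x') (y + y')"
    and P_act: "\<And>s x y. s \<in> S \<Longrightarrow> P x y \<Longrightarrow> P (act s x) (act' s y)"
    and P_unique: "\<And>x y y'. y \<in> C \<Longrightarrow> y' \<in> C \<Longrightarrow> P x y \<Longrightarrow> P x y' \<Longrightarrow> y = y'"
    and P_total: "\<And>y. y \<in> C \<Longrightarrow> \<exists>x\<in>V. P x y"
  shows "\<exists>N\<subseteq>V. is_submod act S N \<and>
    (\<exists>f. (\<forall>x\<in>N. \<forall>y\<in>N. f (x + y) = f x + f y) \<and>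
         (\<forall>s\<in>S. \<forall>x\<in>N. f (act s x) = act' s (f x)) \<and> f ` N = C)"
proof -
  define N where "N = {x \<in> V. \<exists>y\<in>C. P x y}"
  define f where "f x = (SOME y. y \<in> C \<and> P x y)" for x
  have f: "f x \<in> C \<and> P x (f x)" if "x \<in> N" for x
  proof -
    from that obtain y where "y \<in> C \<and> P x y" unfolding N_def by blast
    then show ?thesis unfolding f_def by (rule someI)
  qed
  have f_eq: "f x = y" if "x \<in> N" "y \<in> C" "P x y" for x y
    using P_unique f that by blast
  have N: "is_submod act S N"
    using V C P_zero P_add P_act unfolding is_submod_def N_def by blast
  have f_add: "f (x + y) = f x + f y" if "x \<in> N" "y \<in> N" for x y
  proof (rule f_eq)
    show "x + y \<in> N" using N that unfolding is_submod_def by blast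
    show "f x + f y \<in> C" using C f that unfolding is_submod_def by blast
    show "P (x + y) (f x + f y)" using P_add f that by blast
  qed
  have f_act: "f (act s x) = act' s (f x)" if "s \<in> S" "x \<in> N" for s x
  proof (rule f_eq)
    show "act s x \<in> N" using N that unfolding is_submod_def by blast
    show "act' s (f x) \<in> C" using C f that unfolding is_submod_def by blast
    show "P (act s x) (act' s (f x))" using P_act f that by blast
  qed
  have "C \<subseteq> f ` N"
  proof
    fix y assume "y \<in> C"
    then obtain x where "x \<in> V" "P x y" using P_total by blast
    with \<open>y \<in> C\<close> have "x \<in> N" unfolding N_def by blast
    have "f x = y" using f_eq \<open>x \<in> N\<close> \<open>y \<in> C\<close> \<open>P x y\<close> by blast
    with \<open>x \<in> N\<close> show "y \<in> f ` N" by blast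
  qed
  then have "f ` N = C" using f by blast
  moreover have "N \<subseteq> V" unfolding N_def by blast
  ultimately show ?thesis
    using N f_add f_act by (intro exI[of _ N] conjI exI[of _ f]) auto
qed

definition jumps :: "(nat \<Rightarrow> 'a) \<Rightarrow> nat \<Rightarrow> nat" where
  "jumps c n = card {i. i < n \<and> c i \<noteq> c (Suc i)}"

lemma jumps_0 [simp]: "jumps c 0 = 0"
  unfolding jumps_def by simp

lemma jumps_Suc: "jumps c (Suc n) = jumps c n + (if c n = c (Suc n) then 0 else 1)"
proof -
  have "{i. i < Suc n \<and> c i \<noteq> c (Suc i)} =
      {i. i < n \<and> c i \<noteq> c (Suc i)} \<union> (if c n = c (Suc n) then {} else {n})"
    by (auto simp: less_Suc_eq)
  then show ?thesis unfolding jumps_def by simp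
qed

lemma jumps_cong: "(\<And>i. i \<le> n \<Longrightarrow> c i = c' i) \<Longrightarrow> jumps c n = jumps c' n"
  unfolding jumps_def by (rule arg_cong[where f = card]) auto

lemma jumps_strict: "(\<And>i. i < n \<Longrightarrow> c i \<noteq> c (Suc i)) \<Longrightarrow> jumps c n = n"
  unfolding jumps_def by (subgoal_tac "{i. i < n \<and> c i \<noteq> c (Suc i)} = {..<n}") auto

lemma jumps_le_plus:
  assumes "\<And>i. i < n \<Longrightarrow> c i \<noteq> c (Suc i) \<Longrightarrow> d i \<noteq> d (Suc i) \<or> e i \<noteq> e (Suc i)"
  shows "jumps c n \<le> jumps d n + jumps e n"
proof -
  have "{i. i < n \<and> c i \<noteq> c (Suc i)} \<subseteq>
      {i. i < n \<and> d i \<noteq> d (Suc i)} \<union> {i. i < n \<and> e i \<noteq> e (Suc i)}"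
    using assms by blast
  then have "jumps c n \<le> card ({i. i < n \<and> d i \<noteq> d (Suc i)} \<union> {i. i < n \<and> e i \<noteq> e (Suc i)})"
    unfolding jumps_def by (intro card_mono) auto
  also have "\<dots> \<le> jumps d n + jumps e n"
    unfolding jumps_def by (rule card_Un_le)
  finally show ?thesis .
qed

lemma lift_Suc_mono_le_upto:
  fixes c :: "nat \<Rightarrow> 'a::order"
  assumes "\<And>i. i < n \<Longrightarrow> c i \<le> c (Suc i)" "i \<le> j" "j \<le> n"
  shows "c i \<le> c j"
  by (rule lift_Suc_mono_le_ivl[of "{..<n}"]) (use assms in auto)

lemma jumps_two_valued:
  fixes c :: "nat \<Rightarrow> 'a::order"
  assumes mono: "\<And>i. i < n \<Longrightarrow> c i \<le> c (Suc i)" and vals: "\<And>i. i \<le> n \<Longrightarrow> c i \<in> {a, b}"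
  shows "jumps c n \<le> 1"
proof -
  have jump: "c i < c (Suc i)" if "i < n" "c i \<noteq> c (Suc i)" for i
    using mono that by (simp add: order_less_le)
  have mono_le: "c k \<le> c l" if "k \<le> l" "l \<le> n" for k l
    using mono that by (rule lift_Suc_mono_le_upto)
  have no_two_jumps: False
    if "i < j" "j < n" "c i \<noteq> c (Suc i)" "c j \<noteq> c (Suc j)" for i j
  proof -
    have "c i < c (Suc i)" "c (Suc i) \<le> c j" using jump mono_le that by simp_all
    then have ij: "c i < c j" by (rule order_less_le_trans)
    moreover have jj: "c j < c (Suc j)" using jump that by blast
    moreover have "c i < c (Suc j)" using ij jj by (rule less_trans)
    moreover have "c i \<in> {a, b}" "c j \<in> {a, b}" "c (Suc j) \<in> {a, b}" using vals that by simp_all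
    ultimately show False by (metis empty_iff insert_iff order_less_irrefl)
  qed
  have "i = j" if "i < n" "c i \<noteq> c (Suc i)" "j < n" "c j \<noteq> c (Suc j)" for i j
    using no_two_jumps[of i j] no_two_jumps[of j i] that by (cases i j rule: linorder_cases) auto
  then have "\<forall>i\<in>{i. i < n \<and> c i \<noteq> c (Suc i)}. \<forall>j\<in>{i. i < n \<and> c i \<noteq> c (Suc i)}. i = j"
    by blast
  then show ?thesis unfolding jumps_def One_nat_def by (subst card_le_Suc0_iff_eq) simp_all
qed

fun irredundant :: "'a::comm_monoid_add set \<Rightarrow> 'a set list \<Rightarrow> bool" where
  "irredundant K [] \<longleftrightarrow> True"
| "irredundant K (S # L) \<longleftrightarrow> \<not> S \<subseteq> K + sum_list L \<and> irredundant K L"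

text \<open>Junk unless \<open>S\<close> has a nonzero element; it is only applied to simple submodules.\<close>
definition some_nonzero :: "'a::zero set \<Rightarrow> 'a" where
  "some_nonzero S = (SOME x. x \<in> S \<and> x \<noteq> 0)"

lemma sum_fun_apply: "(sum f A) x = (\<Sum>a\<in>A. f a x)"
  by (induction A rule: infinite_finite_induct) auto

definition unit_poly_mat :: "nat \<Rightarrow> nat \<Rightarrow> nat \<Rightarrow> nat \<Rightarrow> 'r::ring_1 poly" where
  "unit_poly_mat j i = (\<lambda>a b. if a = j \<and> b = 0 then monom 1 i else 0)"

text \<open>Only the first column of \<open>A\<close> is used: the coefficient of \<open>t\<^sup>i\<close> in entry \<open>(j,0)\<close> is the
coordinate of \<open>\<psi> (U ! j)\<close> along \<open>H ! i\<close>.\<close>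
definition mat_represents ::
    "('r::ring_1 \<Rightarrow> 'm::ab_group_add \<Rightarrow> 'm) \<Rightarrow> 'm list \<Rightarrow> 'm list \<Rightarrow> (nat \<Rightarrow> nat \<Rightarrow> 'r poly) \<Rightarrow> ('m \<Rightarrow> 'm) \<Rightarrow> bool"
  where "mat_represents smul H U A \<psi> \<longleftrightarrow>
    (\<forall>j<length U. \<psi> (U ! j) = (\<Sum>i<length H. smul (coeff (A j 0) i) (H ! i)))"

lemma unit_poly_mat_in_poly_mats: "j < m \<Longrightarrow> unit_poly_mat j i \<in> poly_mats m"
  unfolding poly_mats_def unit_poly_mat_def by auto

lemma unit_poly_mats_combination_entry:
  fixes c :: "nat \<Rightarrow> nat \<Rightarrow> 'r::ring_1"
  assumes "j < p"
  shows "(\<Sum>j'<p. \<Sum>i<q. mat_smul (c j' i) (unit_poly_mat j' i)) j 0 = (\<Sum>i<q. monom (c j i) i)"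
proof -
  have entry: "mat_smul r (unit_poly_mat j' i) j 0 = (if j = j' then monom r i else 0)" for r :: 'r and j' i
    unfolding mat_smul_def unit_poly_mat_def by (simp add: map_poly_monom)
  have "(\<Sum>j'<p. \<Sum>i<q. mat_smul (c j' i) (unit_poly_mat j' i)) j 0 =
      (\<Sum>j'<p. \<Sum>i<q. if j = j' then monom (c j' i) i else 0)"
    by (simp add: sum_fun_apply entry)
  also have "\<dots> = (\<Sum>i<q. \<Sum>j'<p. if j = j' then monom (c j' i) i else 0)"
    by (rule sum.swap)
  also have "\<dots> = (\<Sum>i<q. monom (c j i) i)" using assms by simp
  finally show ?thesis .
qed

lemma coeff_sum_monom_lessThan: "i < q \<Longrightarrow> coeff (\<Sum>k<q. monom (c k) k) i = c i"
  by (simp add: coeff_sum)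

locale left_mod =
  fixes smul :: "'r::ring_1 \<Rightarrow> 'm::ab_group_add \<Rightarrow> 'm"
  assumes left_module: "left_module smul"
begin

abbreviation submod :: "'m set \<Rightarrow> bool" where
  "submod N \<equiv> is_submod smul UNIV N"

lemma smul_add_right: "smul r (x + y) = smul r x + smul r y"
  and smul_add_left: "smul (r + s) x = smul r x + smul s x"
  and smul_mult: "smul (r * s) x = smul r (smul s x)"
  and smul_one [simp]: "smul 1 x = x"
  using left_module unfolding left_module_def by auto

lemma smul_zero_right [simp]: "smul r 0 = 0"
  by (metis add_cancel_right_right smul_add_right)

lemma smul_zero_left [simp]: "smul 0 x = 0"
  by (metis add_cancel_right_right add_0 smul_add_left)

lemma smul_minus_left: "smul (- r) x = - smul r x"
  by (metis add.right_inverse smul_add_left smul_zero_left add.inverse_unique)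

lemma smul_sum_right: "smul r (sum f A) = (\<Sum>i\<in>A. smul r (f i))"
  by (induction A rule: infinite_finite_induct) (auto simp: smul_add_right)

lemma submod_zero: "submod N \<Longrightarrow> 0 \<in> N"
  and submod_add: "submod N \<Longrightarrow> x \<in> N \<Longrightarrow> y \<in> N \<Longrightarrow> x + y \<in> N"
  and submod_smul: "submod N \<Longrightarrow> x \<in> N \<Longrightarrow> smul r x \<in> N"
  unfolding is_submod_def by auto

lemma submod_diff: "submod N \<Longrightarrow> x \<in> N \<Longrightarrow> y \<in> N \<Longrightarrow> x - y \<in> N"
  by (metis diff_conv_add_uminus smul_minus_left smul_one submod_add submod_smul)

lemma submod_UNIV: "submod UNIV"
  and submod_zero_set: "submod {0}"
  unfolding is_submod_def by auto

lemma submod_Int: "submod A \<Longrightarrow> submod B \<Longrightarrow> submod (A \<inter> B)"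
  unfolding is_submod_def by auto

lemma submod_set_plus:
  assumes "submod A" "submod B"
  shows "submod (A + B)"
  unfolding is_submod_def
proof (intro conjI ballI)
  show "0 \<in> A + B" using set_plus_intro[OF submod_zero submod_zero, OF assms] by simp
next
  fix x y assume "x \<in> A + B" "y \<in> A + B"
  then obtain a b a' b' where "x = a + b" "a \<in> A" "b \<in> B" "y = a' + b'" "a' \<in> A" "b' \<in> B"
    by (metis set_plus_elim)
  then have "x + y = (a + a') + (b + b')" "a + a' \<in> A" "b + b' \<in> B"
    using assms by (simp_all add: algebra_simps submod_add)
  then show "x + y \<in> A + B" by (simp add: set_plus_intro)
next
  fix r x assume "x \<in> A + B"
  then obtain a b where "x = a + b" "a \<in> A" "b \<in> B" by (rule set_plus_elim)
  then show "smul r x \<in> A + B" using assms by (simp add: set_plus_intro submod_smul smul_add_right)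
qed

lemma submod_sum_list: "\<forall>S\<in>set L. submod S \<Longrightarrow> submod (sum_list L)"
  by (induction L) (auto simp: submod_zero_set submod_set_plus)

lemma set_plus_subset_submod:
  assumes "A \<subseteq> N" "B \<subseteq> N" "submod N"
  shows "A + B \<subseteq> N"
proof
  fix x assume "x \<in> A + B"
  then obtain a b where "x = a + b" "a \<in> A" "b \<in> B" by (rule set_plus_elim)
  then show "x \<in> N" using assms submod_add by blast
qed

lemma set_plus_absorb: "S \<subseteq> N \<Longrightarrow> submod N \<Longrightarrow> 0 \<in> S \<Longrightarrow> S + N = N"
  using set_plus_subset_submod[of S N N] set_zero_plus2[of S N] by blast

lemma submod_modular:
  assumes "submod A" "submod B" "submod K" "A \<subseteq> B" "A \<inter> K = B \<inter> K" "A + K = B + K"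
  shows "A = B"
proof
  show "B \<subseteq> A"
  proof
    fix b assume b: "b \<in> B"
    then have "b \<in> A + K" using assms(6) submod_zero[OF assms(3)] by (metis add_0_right set_plus_intro)
    then obtain a k where ak: "b = a + k" "a \<in> A" "k \<in> K" by (rule set_plus_elim)
    then have "k \<in> B" using submod_diff[OF assms(2) b, of a] assms(4) by (simp add: subset_iff)
    then have "k \<in> A" using ak(3) assms(5) by blast
    then show "b \<in> A" using ak submod_add[OF assms(1)] by simp
  qed
qed (rule assms(4))

lemma simple_submod_is_submod: "simple_submod smul S \<Longrightarrow> submod S"
  unfolding simple_submod_def by auto

lemma simple_submod_cases: "simple_submod smul S \<Longrightarrow> submod K \<Longrightarrow> K \<subseteq> S \<Longrightarrow> K = {0} \<or> K = S"
  unfolding simple_submod_def by blast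

lemma simple_submod_nonzero: "simple_submod smul S \<Longrightarrow> \<exists>x\<in>S. x \<noteq> 0"
  unfolding simple_submod_def using submod_zero by blast

lemma simple_submod_span_single:
  assumes "simple_submod smul S" "x \<in> S" "x \<noteq> 0"
  shows "span smul UNIV {x} = S"
proof -
  have "span smul UNIV {x} \<subseteq> S"
    using assms by (intro span_minimal) (auto simp: simple_submod_is_submod)
  moreover have "span smul UNIV {x} \<noteq> {0}" using span_superset[of "{x}"] assms(3) by blast
  ultimately show ?thesis using simple_submod_cases[OF assms(1) span_is_submod] by blast
qed

lemma submod_between_simple_plus:
  assumes S: "simple_submod smul S" and "submod K" "submod L" "K \<subseteq> L" "L \<subseteq> S + K"
  shows "L = K \<or> L = S + K"
proof (cases "L \<inter> S = S")
  case True
  then show ?thesis using set_plus_subset_submod[of S L K] assms(3-5) by blast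
next
  case False
  then have LS: "L \<inter> S = {0}"
    using simple_submod_cases[OF S submod_Int[OF assms(3) simple_submod_is_submod[OF S]]] by blast
  have "L \<subseteq> K"
  proof
    fix x assume x: "x \<in> L"
    with assms(5) have "x \<in> S + K" by blast
    then obtain s k where sk: "x = s + k" "s \<in> S" "k \<in> K" by (rule set_plus_elim)
    then have "s \<in> L" using submod_diff[OF assms(3) x, of k] assms(4) by (simp add: subset_iff)
    then have "s = 0" using LS sk(2) by blast
    then show "x \<in> K" using sk by simp
  qed
  then show ?thesis using assms(4) by blast
qed

definition submod_chain :: "'m set \<Rightarrow> (nat \<Rightarrow> 'm set) \<Rightarrow> nat \<Rightarrow> bool" where
  "submod_chain N c n \<longleftrightarrow> (\<forall>i\<le>n. submod (c i) \<and> c i \<subseteq> N) \<and> (\<forall>i<n. c i \<subseteq> c (Suc i))"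

definition strict_chain :: "'m set \<Rightarrow> (nat \<Rightarrow> 'm set) \<Rightarrow> nat \<Rightarrow> bool" where
  "strict_chain N c n \<longleftrightarrow> c 0 = {0} \<and> c n = N \<and> (\<forall>i\<le>n. submod (c i)) \<and> (\<forall>i<n. c i \<subset> c (Suc i))"

lemma mod_length_eq_Sup_strict_chain: "mod_length smul N = Sup {n. \<exists>c. strict_chain N c n}"
  unfolding mod_length_def strict_chain_def ..

lemma submod_chain_mono:
  assumes "submod_chain N c n" "i \<le> j" "j \<le> n"
  shows "c i \<subseteq> c j"
proof -
  have "\<And>k. k < n \<Longrightarrow> c k \<subseteq> c (Suc k)" using assms(1) unfolding submod_chain_def by blast
  then show ?thesis using assms(2,3) by (rule lift_Suc_mono_le_upto)
qed

lemma submod_chain_UNIV: "submod_chain N c n \<Longrightarrow> submod_chain UNIV c n"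
  unfolding submod_chain_def by blast

lemma submod_chain_extend:
  assumes "submod_chain K c n" "K \<subset> N" "submod N"
  shows "submod_chain N (c(Suc n := N)) (Suc n)" "jumps (c(Suc n := N)) (Suc n) = Suc (jumps c n)"
proof -
  have K: "\<forall>i\<le>n. submod (c i) \<and> c i \<subseteq> K" "\<forall>i<n. c i \<subseteq> c (Suc i)" "K \<subseteq> N"
    using assms(1,2) unfolding submod_chain_def by auto
  then show "submod_chain N (c(Suc n := N)) (Suc n)"
    using assms(3) unfolding submod_chain_def by (force simp: le_Suc_eq less_Suc_eq)
  have "jumps (c(Suc n := N)) n = jumps c n" by (rule jumps_cong) simp
  moreover have "c n \<noteq> N" using K(1) assms(2) by blast
  ultimately show "jumps (c(Suc n := N)) (Suc n) = Suc (jumps c n)"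
    by (simp add: jumps_Suc)
qed

lemma strict_chain_extend:
  assumes "strict_chain K c n" "K \<subset> N" "submod N"
  shows "strict_chain N (c(Suc n := N)) (Suc n)"
  unfolding strict_chain_def
proof (intro conjI allI impI)
  show "(c(Suc n := N)) 0 = {0}" "(c(Suc n := N)) (Suc n) = N"
    using assms(1) unfolding strict_chain_def by simp_all
  fix i
  show "i \<le> Suc n \<Longrightarrow> submod ((c(Suc n := N)) i)"
    using assms(1,3) unfolding strict_chain_def by (cases "i = Suc n") simp_all
  show "i < Suc n \<Longrightarrow> (c(Suc n := N)) i \<subset> (c(Suc n := N)) (Suc i)"
    using assms(1,2) unfolding strict_chain_def by (cases "i = n") simp_all
qed

lemma strict_chain_jumps:
  assumes "strict_chain N c n"
  shows "submod_chain N c n" "jumps c n = n"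
proof -
  have step: "\<And>k. k < n \<Longrightarrow> c k \<subseteq> c (Suc k)" using assms unfolding strict_chain_def by blast
  have "c i \<subseteq> c n" if "i \<le> n" for i using step that order_refl by (rule lift_Suc_mono_le_upto)
  then show "submod_chain N c n"
    using assms step unfolding strict_chain_def submod_chain_def by blast
  show "jumps c n = n"
    using assms unfolding strict_chain_def by (intro jumps_strict) blast
qed

lemma exists_strict_chain:
  assumes "submod N"
  shows "\<exists>p e. strict_chain N e p"
proof (cases "N = {0}")
  case True
  then have "strict_chain N (\<lambda>_. N) 0" using assms unfolding strict_chain_def by simp
  then show ?thesis by blast
next
  case False
  have "strict_chain {0} (\<lambda>_. {0}) 0" unfolding strict_chain_def using submod_zero_set by simp
  moreover have "{0} \<subset> N" using False submod_zero[OF assms] by blast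
  ultimately have "strict_chain N ((\<lambda>_. {0})(Suc 0 := N)) (Suc 0)"
    using assms by (rule strict_chain_extend)
  then show ?thesis by blast
qed

lemma exists_strict_chain_refining:
  assumes "submod_chain N c n" "submod N"
  shows "\<exists>p e. jumps c n \<le> p \<and> strict_chain N e p"
  using assms
proof (induction n arbitrary: N)
  case 0
  then show ?case using exists_strict_chain by simp
next
  case (Suc n)
  have "submod_chain (c n) c n"
    using Suc.prems(1) submod_chain_mono[OF Suc.prems(1)] unfolding submod_chain_def by simp
  moreover have "submod (c n)" using Suc.prems(1) unfolding submod_chain_def by simp
  ultimately obtain p e where pe: "jumps c n \<le> p" "strict_chain (c n) e p"
    using Suc.IH by blast
  have between: "c n \<subseteq> c (Suc n)" "c (Suc n) \<subseteq> N"
    using Suc.prems(1) unfolding submod_chain_def by auto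
  show ?case
  proof (cases "c n = N")
    case True
    then have "jumps c (Suc n) = jumps c n" using between by (simp add: jumps_Suc)
    then show ?thesis using pe True by (intro exI[of _ p] exI[of _ e]) simp
  next
    case False
    then have "strict_chain N (e(Suc p := N)) (Suc p)"
      using strict_chain_extend[OF pe(2) _ Suc.prems(2)] between by blast
    moreover have "jumps c (Suc n) \<le> Suc p" using pe(1) by (simp add: jumps_Suc)
    ultimately show ?thesis by blast
  qed
qed

text \<open>Without a bound on chain lengths \<open>mod_length\<close> is the \<open>Sup\<close> of an unbounded set of
naturals, a junk value.\<close>
context
  fixes B :: nat
  assumes jumps_bounded: "\<And>c n. submod_chain UNIV c n \<Longrightarrow> jumps c n \<le> B"
begin

lemma strict_chain_length_bounded:
  assumes "strict_chain N e q"
  shows "q \<le> B"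
  using jumps_bounded[OF submod_chain_UNIV[OF strict_chain_jumps(1)]] strict_chain_jumps(2) assms
  by metis

lemma jumps_le_mod_length:
  assumes "submod_chain N c n" "submod N"
  shows "jumps c n \<le> mod_length smul N"
proof -
  obtain p e where pe: "jumps c n \<le> p" "strict_chain N e p"
    using exists_strict_chain_refining[OF assms] by blast
  have "bdd_above {n. \<exists>c. strict_chain N c n}"
    using strict_chain_length_bounded by (auto intro!: bdd_aboveI[of _ B])
  then have "p \<le> mod_length smul N"
    unfolding mod_length_eq_Sup_strict_chain using pe(2) by (blast intro: cSup_upper)
  then show ?thesis using pe(1) by simp
qed

lemma mod_length_le:
  assumes "submod N"
  shows "mod_length smul N \<le> B"
  unfolding mod_length_eq_Sup_strict_chain
proof (rule cSup_least)
  show "{n. \<exists>c. strict_chain N c n} \<noteq> {}" using exists_strict_chain[OF assms] by blast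
qed (use strict_chain_length_bounded in blast)

end

lemma submod_sum_list_simple: "\<forall>S\<in>set L. simple_submod smul S \<Longrightarrow> submod (sum_list L)"
  by (simp add: simple_submod_is_submod submod_sum_list)

text \<open>By modularity every step of \<open>c\<close> is a step of \<open>c \<inter> K\<close> or of \<open>c + K\<close>, and \<open>c + K\<close> only
takes the values \<open>K\<close> and \<open>S + K\<close>.\<close>
lemma jumps_le_jumps_Int_Suc:
  assumes S: "simple_submod smul S" and K: "submod K" and c: "submod_chain (S + K) c n"
  shows "jumps c n \<le> jumps (\<lambda>i. c i \<inter> K) n + 1"
proof -
  have ci: "submod (c i)" "c i \<subseteq> S + K" if "i \<le> n" for i
    using c that unfolding submod_chain_def by auto
  have step: "c i \<subseteq> c (Suc i)" if "i < n" for i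
    using c that unfolding submod_chain_def by auto
  have SK: "submod (S + K)" using submod_set_plus[OF simple_submod_is_submod[OF S] K] .
  have "jumps c n \<le> jumps (\<lambda>i. c i \<inter> K) n + jumps (\<lambda>i. c i + K) n"
  proof (rule jumps_le_plus)
    fix i assume "i < n" "c i \<noteq> c (Suc i)"
    then show "c i \<inter> K \<noteq> c (Suc i) \<inter> K \<or> c i + K \<noteq> c (Suc i) + K"
      using submod_modular[OF ci(1) ci(1) K, of i "Suc i"] step[of i] by auto
  qed
  moreover have "jumps (\<lambda>i. c i + K) n \<le> 1"
  proof (rule jumps_two_valued)
    show "c i + K \<le> c (Suc i) + K" if "i < n" for i
      using step[OF that] by (simp add: set_plus_mono2)
    show "c i + K \<in> {K, S + K}" if "i \<le> n" for i
    proof -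
      have "K \<subseteq> c i + K" using submod_zero[OF ci(1)[OF that]] by (rule set_zero_plus2)
      moreover have "c i + K \<subseteq> S + K"
        using set_plus_subset_submod[OF ci(2)[OF that] _ SK] set_zero_plus2[OF submod_zero[OF simple_submod_is_submod[OF S]]]
        by blast
      ultimately show ?thesis
        using submod_between_simple_plus[OF S K submod_set_plus[OF ci(1)[OF that] K]] by blast
    qed
  qed
  ultimately show ?thesis by linarith
qed

lemma jumps_le_length_simples:
  assumes "\<forall>S\<in>set Ss. simple_submod smul S" "submod_chain (sum_list Ss) c n"
  shows "jumps c n \<le> length Ss"
  using assms
proof (induction Ss arbitrary: c)
  case Nil
  then have "c i = {0}" if "i \<le> n" for i
    using that submod_zero unfolding submod_chain_def by fastforce
  then have "{i. i < n \<and> c i \<noteq> c (Suc i)} = {}" by auto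
  then show ?case by (simp add: jumps_def)
next
  case (Cons S Ss)
  have S: "simple_submod smul S" and K: "submod (sum_list Ss)"
    using Cons.prems(1) submod_sum_list_simple by auto
  have "submod_chain (sum_list Ss) (\<lambda>i. c i \<inter> sum_list Ss) n"
    using Cons.prems(2) submod_Int[OF _ K] unfolding submod_chain_def by blast
  then have "jumps (\<lambda>i. c i \<inter> sum_list Ss) n \<le> length Ss"
    using Cons.IH Cons.prems(1) by simp
  moreover have "jumps c n \<le> jumps (\<lambda>i. c i \<inter> sum_list Ss) n + 1"
    using jumps_le_jumps_Int_Suc[OF S K] Cons.prems(2) by simp
  ultimately show ?case by simp
qed

lemma exists_irredundant_sublist:
  assumes "\<forall>S\<in>set Ss. submod S" "submod K"
  shows "\<exists>L. set L \<subseteq> set Ss \<and> irredundant K L \<and> K + sum_list L = K + sum_list Ss"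
  using assms(1)
proof (induction Ss)
  case Nil
  then show ?case by (intro exI[of _ "[]"]) simp
next
  case (Cons S Ss)
  then obtain L where L: "set L \<subseteq> set Ss" "irredundant K L" "K + sum_list L = K + sum_list Ss"
    by auto
  have sum: "K + sum_list (S # Ss) = S + (K + sum_list L)"
    using L(3) by (simp add: add_ac)
  show ?case
  proof (cases "S \<subseteq> K + sum_list L")
    case True
    have "submod (K + sum_list L)"
      using L(1) Cons.prems assms(2) by (intro submod_set_plus submod_sum_list) auto
    then have "S + (K + sum_list L) = K + sum_list L"
      using True Cons.prems submod_zero by (intro set_plus_absorb) auto
    then show ?thesis using L sum by auto
  next
    case False
    have "K + sum_list (S # L) = K + sum_list (S # Ss)" using sum by (simp add: add.left_commute)
    then show ?thesis using False L(1,2) by (intro exI[of _ "S # L"]) auto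
  qed
qed

lemma irredundant_extends_chain:
  assumes "irredundant K L" "\<forall>S\<in>set L. submod S" "submod K" "submod_chain K c n"
  shows "\<exists>c' n'. submod_chain (K + sum_list L) c' n' \<and> jumps c' n' = jumps c n + length L"
  using assms
proof (induction L)
  case Nil
  then show ?case by auto
next
  case (Cons S L)
  obtain c' n' where c': "submod_chain (K + sum_list L) c' n'" "jumps c' n' = jumps c n + length L"
    using Cons by auto
  have S: "submod S" and L: "submod (sum_list L)"
    using Cons.prems(2) by (auto intro: submod_sum_list)
  have "K + sum_list L \<subseteq> K + sum_list (S # L)"
    using set_zero_plus2[OF submod_zero[OF S], of "sum_list L"] by (auto simp: set_plus_mono2)
  moreover have "S \<subseteq> K + sum_list (S # L)"
    using set_plus_intro[OF submod_zero[OF Cons.prems(3)] set_plus_intro[OF _ submod_zero[OF L]]]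
    by auto
  moreover have "\<not> S \<subseteq> K + sum_list L" using Cons.prems(1) by simp
  ultimately have strict: "K + sum_list L \<subset> K + sum_list (S # L)" by blast
  have "submod (K + sum_list (S # L))"
    using Cons.prems(3) S L by (simp add: submod_set_plus)
  with strict have "submod_chain (K + sum_list (S # L)) (c'(Suc n' := K + sum_list (S # L))) (Suc n')"
      "jumps (c'(Suc n' := K + sum_list (S # L))) (Suc n') = jumps c n + length (S # L)"
    using submod_chain_extend[OF c'(1)] c'(2) by simp_all
  then show ?case by blast
qed

lemma exists_simple_sum_containing:
  assumes "semisimple smul"
  shows "\<exists>Ss. (\<forall>S\<in>set Ss. simple_submod smul S) \<and> x \<in> sum_list Ss"
proof -
  define W where "W = {x. \<exists>Ss. (\<forall>S\<in>set Ss. simple_submod smul S) \<and> x \<in> sum_list Ss}"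
  have "submod W" unfolding is_submod_def
  proof (intro conjI ballI)
    show "0 \<in> W" unfolding W_def by (intro CollectI exI[of _ "[]"]) simp
  next
    fix x y assume "x \<in> W" "y \<in> W"
    then obtain S1 S2 where "\<forall>S\<in>set S1. simple_submod smul S" "x \<in> sum_list S1"
      "\<forall>S\<in>set S2. simple_submod smul S" "y \<in> sum_list S2" unfolding W_def by blast
    then show "x + y \<in> W" unfolding W_def
      by (intro CollectI exI[of _ "S1 @ S2"]) auto
  next
    fix r x assume "x \<in> W"
    then obtain Ss where "\<forall>S\<in>set Ss. simple_submod smul S" "x \<in> sum_list Ss" unfolding W_def by blast
    moreover have "submod (sum_list Ss)" using calculation(1) by (rule submod_sum_list_simple)
    ultimately show "smul r x \<in> W" unfolding W_def using submod_smul by blast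
  qed
  moreover have "\<Union>{N. simple_submod smul N} \<subseteq> W"
    unfolding W_def by clarify (intro CollectI exI[of _ "[_]"], simp)
  ultimately have "W = UNIV"
    using span_minimal assms unfolding semisimple_def by blast
  then show ?thesis unfolding W_def by blast
qed

lemma exists_simple_decomposition:
  assumes "fin_gen smul" "semisimple smul"
  shows "\<exists>Ss. (\<forall>S\<in>set Ss. simple_submod smul S) \<and> sum_list Ss = UNIV"
proof -
  obtain G where G: "finite G" "span smul UNIV G = UNIV" using assms(1) unfolding fin_gen_def by blast
  have "\<exists>Ss. (\<forall>S\<in>set Ss. simple_submod smul S) \<and> G \<subseteq> sum_list Ss"
    using G(1)
  proof (induction G rule: finite_induct)
    case empty
    then show ?case by (intro exI[of _ "[]"]) simp
  next
    case (insert g G)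
    then obtain Ss where Ss: "\<forall>S\<in>set Ss. simple_submod smul S" "G \<subseteq> sum_list Ss" by blast
    obtain Sg where Sg: "\<forall>S\<in>set Sg. simple_submod smul S" "g \<in> sum_list Sg"
      using exists_simple_sum_containing[OF assms(2)] by blast
    have "0 \<in> sum_list Sg" "0 \<in> sum_list Ss"
      using Ss(1) Sg(1) submod_zero submod_sum_list_simple by blast+
    then have "g \<in> sum_list Sg + sum_list Ss" "G \<subseteq> sum_list Sg + sum_list Ss"
      using set_plus_intro[OF Sg(2)] set_zero_plus2 Ss(2) by (force, blast)
    then have "insert g G \<subseteq> sum_list (Sg @ Ss)" by simp
    then show ?case using Ss(1) Sg(1) by (intro exI[of _ "Sg @ Ss"]) auto
  qed
  then obtain Ss where Ss: "\<forall>S\<in>set Ss. simple_submod smul S" "G \<subseteq> sum_list Ss" by blast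
  moreover have "submod (sum_list Ss)" using Ss(1) by (rule submod_sum_list_simple)
  ultimately show ?thesis using span_minimal[of smul UNIV "sum_list Ss" G] G(2) by blast
qed

lemma endo_add: "is_endo smul f \<Longrightarrow> f (x + y) = f x + f y"
  and endo_smul: "is_endo smul f \<Longrightarrow> f (smul r x) = smul r (f x)"
  unfolding is_endo_def by auto

lemma endo_zero: "is_endo smul f \<Longrightarrow> f 0 = 0"
  by (metis add_cancel_right_right endo_add)

lemma endo_diff: "is_endo smul f \<Longrightarrow> f (x - y) = f x - f y"
  by (metis add_diff_cancel diff_add_cancel endo_add)

lemma endo_funpow: "is_endo smul f \<Longrightarrow> is_endo smul (f ^^ n)"
  by (induction n) (auto simp: is_endo_def)

lemma submod_image:
  assumes "is_endo smul f" "submod A"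
  shows "submod (f ` A)"
  unfolding is_submod_def
proof (intro conjI ballI)
  show "0 \<in> f ` A" using endo_zero[OF assms(1)] submod_zero[OF assms(2)] by (metis image_eqI)
next
  fix x y assume "x \<in> f ` A" "y \<in> f ` A"
  then obtain a b where "a \<in> A" "b \<in> A" "x = f a" "y = f b" by blast
  then have "x + y = f (a + b)" "a + b \<in> A"
    using endo_add[OF assms(1)] submod_add[OF assms(2)] by simp_all
  then show "x + y \<in> f ` A" by blast
next
  fix r x assume "x \<in> f ` A"
  then obtain a where "a \<in> A" "x = f a" by blast
  then have "smul r x = f (smul r a)" "smul r a \<in> A"
    using endo_smul[OF assms(1)] submod_smul[OF assms(2)] by simp_all
  then show "smul r x \<in> f ` A" by blast
qed

lemma submod_kernel: "is_endo smul f \<Longrightarrow> submod {x. f x = 0}"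
  unfolding is_submod_def by (auto simp: endo_zero endo_add endo_smul)

lemma submod_eq_of_kernel_image:
  assumes f: "is_endo smul f" and "submod A" "submod B" "A \<subseteq> B"
    and "A \<inter> {x. f x = 0} = B \<inter> {x. f x = 0}" "f ` A = f ` B"
  shows "A = B"
proof
  show "B \<subseteq> A"
  proof
    fix b assume b: "b \<in> B"
    then obtain a where a: "a \<in> A" "f a = f b" using assms(6) by (metis imageE imageI)
    have "b - a \<in> B" using submod_diff[OF assms(3) b] a(1) assms(4) by blast
    moreover have "f (b - a) = 0" using endo_diff[OF f] a(2) by simp
    ultimately have "b - a \<in> A" using assms(5) by blast
    then show "b \<in> A" using submod_add[OF assms(2) _ a(1)] by fastforce
  qed
qed (rule assms(4))

lemma some_nonzero_simple:
  assumes "simple_submod smul S"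
  shows "some_nonzero S \<in> S" "some_nonzero S \<noteq> 0"
  using someI_ex[OF simple_submod_nonzero[OF assms, unfolded Bex_def]]
  unfolding some_nonzero_def by auto

lemma sum_list_simple_subset_span:
  assumes "\<forall>S\<in>set L. simple_submod smul S"
  shows "sum_list L \<subseteq> span smul UNIV (set (map some_nonzero L))"
  using assms
proof (induction L)
  case Nil
  then show ?case using submod_zero[OF span_is_submod] by simp
next
  case (Cons S L)
  have S: "simple_submod smul S" using Cons.prems by simp
  have "S = span smul UNIV {some_nonzero S}"
    using simple_submod_span_single[OF S some_nonzero_simple[OF S]] by simp
  also have "\<dots> \<subseteq> span smul UNIV (set (map some_nonzero (S # L)))"
    by (rule span_mono) simp
  finally have "S \<subseteq> span smul UNIV (set (map some_nonzero (S # L)))" .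
  moreover have "sum_list L \<subseteq> span smul UNIV (set (map some_nonzero (S # L)))"
    using Cons span_mono[of "set (map some_nonzero L)" "set (map some_nonzero (S # L))"] by auto
  ultimately show ?case using set_plus_subset_submod[OF _ _ span_is_submod] by simp
qed

context
  fixes L :: "'m set list"
  assumes L_simple: "\<forall>S\<in>set L. simple_submod smul S"
    and L_irredundant: "irredundant {0} L"
    and L_UNIV: "sum_list L = UNIV"
begin

lemma jumps_le_length_decomposition: "submod_chain UNIV c n \<Longrightarrow> jumps c n \<le> length L"
  using jumps_le_length_simples[OF L_simple] L_UNIV by simp

lemma exists_chain_length_decomposition: "\<exists>c n. submod_chain UNIV c n \<and> jumps c n = length L"
proof -
  have "submod_chain {0} (\<lambda>_. {0}) 0" unfolding submod_chain_def using submod_zero_set by simp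
  then obtain c n where "submod_chain ({0} + sum_list L) c n" "jumps c n = 0 + length L"
    using irredundant_extends_chain[OF L_irredundant _ submod_zero_set] L_simple simple_submod_is_submod
    by fastforce
  then show ?thesis using L_UNIV by auto
qed

lemma mod_length_UNIV_eq_length: "mod_length smul UNIV = length L"
proof (rule antisym)
  show "mod_length smul UNIV \<le> length L"
    using mod_length_le[OF jumps_le_length_decomposition submod_UNIV] .
  obtain c n where "submod_chain UNIV c n" "jumps c n = length L"
    using exists_chain_length_decomposition by blast
  then show "length L \<le> mod_length smul UNIV"
    using jumps_le_mod_length[OF jumps_le_length_decomposition _ submod_UNIV] by metis
qed

lemma exists_spanning_list: "\<exists>H. length H = mod_length smul UNIV \<and> span smul UNIV (set H) = UNIV"
  using sum_list_simple_subset_span[OF L_simple] L_UNIV mod_length_UNIV_eq_length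
  by (intro exI[of _ "map some_nonzero L"]) auto

text \<open>A chain \<open>c\<close> of \<open>M\<close> with \<open>d\<close> steps splits into \<open>c \<inter> ker \<phi>\<close>, with at most \<open>m\<close> steps, and
\<open>\<phi>(c)\<close>; extending \<open>\<phi>(c)\<close> by the irredundant summands \<open>L'\<close> leaves it at most \<open>d - |L'|\<close> steps.\<close>
lemma length_irredundant_over_image_le:
  assumes \<phi>: "is_endo smul \<phi>" and L': "irredundant (range \<phi>) L'" "\<forall>S\<in>set L'. submod S"
    and L'_UNIV: "range \<phi> + sum_list L' = UNIV"
  shows "length L' \<le> mod_length smul {x. \<phi> x = 0}"
proof -
  define Z where "Z = {x. \<phi> x = 0}"
  have K: "submod (range \<phi>)" using submod_image[OF \<phi> submod_UNIV] .
  have Z: "submod Z" unfolding Z_def using submod_kernel[OF \<phi>] .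
  obtain c n where c: "submod_chain UNIV c n" "jumps c n = length L"
    using exists_chain_length_decomposition by blast
  have "submod_chain Z (\<lambda>i. c i \<inter> Z) n"
    using c(1) submod_Int[OF _ Z] unfolding submod_chain_def by blast
  then have "jumps (\<lambda>i. c i \<inter> Z) n \<le> mod_length smul Z"
    using jumps_le_mod_length[OF jumps_le_length_decomposition _ Z] by blast
  moreover have image_chain: "submod_chain (range \<phi>) (\<lambda>i. \<phi> ` c i) n"
    using c(1) submod_image[OF \<phi>] unfolding submod_chain_def by blast
  have "jumps (\<lambda>i. \<phi> ` c i) n + length L' \<le> length L"
    using irredundant_extends_chain[OF L' K image_chain] L'_UNIV jumps_le_length_decomposition
    by metis
  moreover have "jumps c n \<le> jumps (\<lambda>i. c i \<inter> Z) n + jumps (\<lambda>i. \<phi> ` c i) n"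
  proof (rule jumps_le_plus)
    fix i assume "i < n" "c i \<noteq> c (Suc i)"
    then show "c i \<inter> Z \<noteq> c (Suc i) \<inter> Z \<or> \<phi> ` c i \<noteq> \<phi> ` c (Suc i)"
      using submod_eq_of_kernel_image[OF \<phi>, of "c i" "c (Suc i)"] c(1)
      unfolding submod_chain_def Z_def by auto
  qed
  ultimately show ?thesis using c(2) unfolding Z_def by simp
qed

lemma exists_complement_list:
  assumes \<phi>: "is_endo smul \<phi>"
  shows "\<exists>U. length U \<le> mod_length smul {x. \<phi> x = 0} \<and> UNIV = range \<phi> + span smul UNIV (set U)"
proof -
  have K: "submod (range \<phi>)" using submod_image[OF \<phi> submod_UNIV] .
  obtain L' where L': "set L' \<subseteq> set L" "irredundant (range \<phi>) L'"
      "range \<phi> + sum_list L' = range \<phi> + sum_list L"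
    using exists_irredundant_sublist[OF _ K] L_simple simple_submod_is_submod by blast
  have L'_simple: "\<forall>S\<in>set L'. simple_submod smul S" using L'(1) L_simple by blast
  have L'_UNIV: "range \<phi> + sum_list L' = UNIV"
    using L'(3) L_UNIV set_zero_plus2[OF submod_zero[OF K], of UNIV] by auto
  have "UNIV = range \<phi> + span smul UNIV (set (map some_nonzero L'))"
    using L'_UNIV set_plus_mono2[OF order_refl sum_list_simple_subset_span[OF L'_simple]] by blast
  moreover have "length L' \<le> mod_length smul {x. \<phi> x = 0}"
    using length_irredundant_over_image_le[OF \<phi> L'(2) _ L'_UNIV] L'_simple simple_submod_is_submod
    by blast
  ultimately show ?thesis by (intro exI[of _ "map some_nonzero L'"]) simp
qed

end

lemma exists_generator_lists:
  assumes "fin_gen smul" "semisimple smul" "is_endo smul \<phi>"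
  shows "\<exists>H U. length H = mod_length smul UNIV \<and> span smul UNIV (set H) = UNIV \<and>
    length U \<le> mod_length smul {x. \<phi> x = 0} \<and> UNIV = range \<phi> + span smul UNIV (set U)"
proof -
  obtain Ss where Ss: "\<forall>S\<in>set Ss. simple_submod smul S" "sum_list Ss = UNIV"
    using exists_simple_decomposition[OF assms(1,2)] by blast
  then obtain L where "set L \<subseteq> set Ss" "irredundant {0} L" "sum_list L = UNIV"
    using exists_irredundant_sublist[OF _ submod_zero_set] simple_submod_is_submod by force
  moreover have "\<forall>S\<in>set L. simple_submod smul S" using calculation(1) Ss(1) by blast
  ultimately show ?thesis
    using exists_spanning_list exists_complement_list[OF _ _ _ assms(3)] by meson
qed

lemma centralizer_iff: "\<psi> \<in> centralizer smul \<phi> \<longleftrightarrow> is_endo smul \<psi> \<and> (\<forall>x. \<psi> (\<phi> x) = \<phi> (\<psi> x))"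
  unfolding centralizer_def by (auto simp: fun_eq_iff)

lemma centralizer_is_submod:
  assumes \<phi>: "is_endo smul \<phi>"
  shows "is_submod (hom_smul smul) ring_center (centralizer smul \<phi>)"
  unfolding is_submod_def
proof (intro conjI ballI)
  show "0 \<in> centralizer smul \<phi>"
    unfolding centralizer_iff is_endo_def by (simp add: endo_zero[OF \<phi>])
next
  fix \<psi>1 \<psi>2 assume "\<psi>1 \<in> centralizer smul \<phi>" "\<psi>2 \<in> centralizer smul \<phi>"
  then have \<psi>: "is_endo smul \<psi>1" "is_endo smul \<psi>2"
    and comm: "\<And>x. \<psi>1 (\<phi> x) = \<phi> (\<psi>1 x)" "\<And>x. \<psi>2 (\<phi> x) = \<phi> (\<psi>2 x)"
    unfolding centralizer_iff by blast+
  have "is_endo smul (\<psi>1 + \<psi>2)"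
    unfolding is_endo_def plus_fun_apply
    using endo_add[OF \<psi>(1)] endo_add[OF \<psi>(2)] endo_smul[OF \<psi>(1)] endo_smul[OF \<psi>(2)]
    by (simp add: smul_add_right add_ac)
  moreover have "(\<psi>1 + \<psi>2) (\<phi> x) = \<phi> ((\<psi>1 + \<psi>2) x)" for x
    using comm endo_add[OF \<phi>] by simp
  ultimately show "\<psi>1 + \<psi>2 \<in> centralizer smul \<phi>" unfolding centralizer_iff by blast
next
  fix z :: 'r and \<psi> assume z: "z \<in> ring_center" and "\<psi> \<in> centralizer smul \<phi>"
  then have \<psi>: "is_endo smul \<psi>" and comm: "\<And>x. \<psi> (\<phi> x) = \<phi> (\<psi> x)"
    unfolding centralizer_iff by blast+
  have "z * r = r * z" for r using z unfolding ring_center_def by blast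
  then have "smul z (smul r x) = smul r (smul z x)" for r x by (simp flip: smul_mult)
  then have "is_endo smul (hom_smul smul z \<psi>)"
    unfolding is_endo_def hom_smul_def
    using endo_add[OF \<psi>] endo_smul[OF \<psi>] by (simp add: smul_add_right)
  moreover have "hom_smul smul z \<psi> (\<phi> x) = \<phi> (hom_smul smul z \<psi> x)" for x
    unfolding hom_smul_def using comm endo_smul[OF \<phi>] by simp
  ultimately show "hom_smul smul z \<psi> \<in> centralizer smul \<phi>" unfolding centralizer_iff by blast
qed

text \<open>The invariant is \<open>E + \<phi>\<^sup>n(M) = M\<close>, which for \<open>n = k\<close> gives \<open>E = M\<close>.\<close>
lemma submod_eq_UNIV_of_nilpotent:
  assumes \<phi>: "is_endo smul \<phi>" and nil: "\<phi> ^^ k = (\<lambda>_. 0)"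
    and gen: "UNIV = range \<phi> + T" and E: "submod E" "T \<subseteq> E" "\<phi> ` E \<subseteq> E"
  shows "E = UNIV"
proof -
  have stable: "(\<phi> ^^ n) ` E \<subseteq> E" for n
    by (induction n) (use E(3) in auto)
  have "E + range (\<phi> ^^ n) = UNIV" for n
  proof (induction n)
    case 0
    then show ?case using set_zero_plus2[OF submod_zero[OF E(1)], of UNIV] by auto
  next
    case (Suc n)
    have "range (\<phi> ^^ n) \<subseteq> E + range (\<phi> ^^ Suc n)"
    proof
      fix x assume "x \<in> range (\<phi> ^^ n)"
      then obtain y where x: "x = (\<phi> ^^ n) y" by blast
      obtain z t where "y = \<phi> z + t" "t \<in> T" using gen by (metis UNIV_I rangeE set_plus_elim)
      then have "x = (\<phi> ^^ n) t + (\<phi> ^^ Suc n) z"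
        using x endo_add[OF endo_funpow[OF \<phi>]] by (simp add: funpow_swap1 add.commute)
      moreover have "(\<phi> ^^ n) t \<in> E" using stable[of n] E(2) \<open>t \<in> T\<close> by blast
      ultimately show "x \<in> E + range (\<phi> ^^ Suc n)" by (metis rangeI set_plus_intro)
    qed
    then have "E + range (\<phi> ^^ n) \<subseteq> E + (E + range (\<phi> ^^ Suc n))" by (rule set_plus_mono2[OF order_refl])
    also have "\<dots> = (E + E) + range (\<phi> ^^ Suc n)" by (simp only: add.assoc)
    also have "\<dots> \<subseteq> E + range (\<phi> ^^ Suc n)"
      using set_plus_subset_submod[OF order_refl order_refl E(1)] by (rule set_plus_mono2) simp
    finally show ?case using Suc.IH by blast
  qed
  then have "E + range (\<phi> ^^ k) = UNIV" .
  moreover have "range (\<phi> ^^ k) = {0}" using nil by auto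
  ultimately show ?thesis by simp
qed

lemma centralizer_eq_on_complement:
  assumes \<phi>: "is_endo smul \<phi>" and nil: "\<phi> ^^ k = (\<lambda>_. 0)"
    and gen: "UNIV = range \<phi> + span smul UNIV U"
    and \<psi>: "\<psi>1 \<in> centralizer smul \<phi>" "\<psi>2 \<in> centralizer smul \<phi>"
    and agree: "\<And>u. u \<in> U \<Longrightarrow> \<psi>1 u = \<psi>2 u"
  shows "\<psi>1 = \<psi>2"
proof -
  define E where "E = {x. \<psi>1 x = \<psi>2 x}"
  have endo: "is_endo smul \<psi>1" "is_endo smul \<psi>2"
    and comm: "\<And>x. \<psi>1 (\<phi> x) = \<phi> (\<psi>1 x)" "\<And>x. \<psi>2 (\<phi> x) = \<phi> (\<psi>2 x)"
    using \<psi> unfolding centralizer_iff by blast+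
  have E: "submod E"
    unfolding is_submod_def E_def using endo by (auto simp: endo_zero endo_add endo_smul)
  have "E = UNIV"
  proof (rule submod_eq_UNIV_of_nilpotent[OF \<phi> nil gen E])
    show "span smul UNIV U \<subseteq> E" using span_minimal[OF E] agree unfolding E_def by blast
    show "\<phi> ` E \<subseteq> E" using comm unfolding E_def by auto
  qed
  then show ?thesis unfolding E_def by auto
qed

lemma span_list_combination:
  "x \<in> span smul UNIV (set H) \<Longrightarrow> \<exists>c. x = (\<Sum>i<length H. smul (c i) (H ! i))"
proof -
  let ?W = "{x. \<exists>c. x = (\<Sum>i<length H. smul (c i) (H ! i))}"
  have "submod ?W" unfolding is_submod_def
  proof (intro conjI ballI)
    show "0 \<in> ?W" by (intro CollectI exI[of _ "\<lambda>_. 0"]) simp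
  next
    fix x y assume "x \<in> ?W" "y \<in> ?W"
    then obtain c c' where "x = (\<Sum>i<length H. smul (c i) (H ! i))" "y = (\<Sum>i<length H. smul (c' i) (H ! i))"
      by blast
    then have "x + y = (\<Sum>i<length H. smul (c i + c' i) (H ! i))" by (simp add: smul_add_left sum.distrib)
    then show "x + y \<in> ?W" by (intro CollectI exI[of _ "\<lambda>i. c i + c' i"])
  next
    fix r x assume "x \<in> ?W"
    then obtain c where "x = (\<Sum>i<length H. smul (c i) (H ! i))" by blast
    then have "smul r x = (\<Sum>i<length H. smul (r * c i) (H ! i))" by (simp add: smul_sum_right smul_mult)
    then show "smul r x \<in> ?W" by (intro CollectI exI[of _ "\<lambda>i. r * c i"])
  qed
  moreover have "set H \<subseteq> ?W"
  proof
    fix x assume "x \<in> set H"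
    then obtain k where k: "k < length H" "x = H ! k" by (metis in_set_conv_nth)
    have "(\<Sum>i<length H. smul (if i = k then 1 else 0) (H ! i)) = (\<Sum>i<length H. if i = k then H ! i else 0)"
      by (rule sum.cong) auto
    also have "\<dots> = H ! k" using k(1) by simp
    finally have "(\<Sum>i<length H. smul (if i = k then 1 else 0) (H ! i)) = x" using k(2) by simp
    then show "x \<in> ?W" by (intro CollectI exI[of _ "\<lambda>i. if i = k then 1 else 0"]) simp
  qed
  ultimately show "x \<in> span smul UNIV (set H) \<Longrightarrow> ?thesis" using span_minimal by blast
qed

lemma mat_represents_zero: "mat_represents smul H U 0 0"
  unfolding mat_represents_def by simp

lemma mat_represents_add:
  "mat_represents smul H U A \<psi> \<Longrightarrow> mat_represents smul H U B \<chi> \<Longrightarrow>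
    mat_represents smul H U (A + B) (\<psi> + \<chi>)"
  unfolding mat_represents_def by (simp add: smul_add_left sum.distrib)

lemma mat_represents_smul:
  "mat_represents smul H U A \<psi> \<Longrightarrow> mat_represents smul H U (mat_smul z A) (hom_smul smul z \<psi>)"
  unfolding mat_represents_def mat_smul_def hom_smul_def
  by (simp add: coeff_map_poly smul_mult smul_sum_right)

lemma exists_representing_mat:
  assumes H: "span smul UNIV (set H) = UNIV" and "length U \<le> m" "length H \<le> d"
  shows "\<exists>A\<in>span mat_smul UNIV {unit_poly_mat j i | j i. j < m \<and> i < d}. mat_represents smul H U A \<psi>"
proof -
  have "\<forall>j. \<exists>cj. \<psi> (U ! j) = (\<Sum>i<length H. smul (cj i) (H ! i))"
    using span_list_combination H by blast
  then obtain c where c: "\<And>j. \<psi> (U ! j) = (\<Sum>i<length H. smul (c j i) (H ! i))"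
    by metis
  define A where "A = (\<Sum>j<length U. \<Sum>i<length H. mat_smul (c j i) (unit_poly_mat j i))"
  let ?V = "span mat_smul UNIV {unit_poly_mat j i | j i. j < m \<and> i < d}"
  have V: "is_submod mat_smul UNIV ?V" by (rule span_is_submod)
  have "mat_smul (c j i) (unit_poly_mat j i) \<in> ?V" if "j < length U" "i < length H" for j i
  proof -
    have "unit_poly_mat j i \<in> ?V" using span_superset that assms(2,3) by fastforce
    then show ?thesis using V unfolding is_submod_def by blast
  qed
  then have "A \<in> ?V"
    unfolding A_def by (intro is_submod_sum[OF V]) simp
  moreover have "mat_represents smul H U A \<psi>"
    unfolding mat_represents_def
  proof (intro allI impI)
    fix j assume "j < length U"
    then have "coeff (A j 0) i = c j i" if "i < length H" for i
      unfolding A_def using that by (simp add: unit_poly_mats_combination_entry coeff_sum_monom_lessThan)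
    then show "\<psi> (U ! j) = (\<Sum>i<length H. smul (coeff (A j 0) i) (H ! i))"
      using c[of j] by simp
  qed
  ultimately show ?thesis by blast
qed

lemma mat_represents_unique:
  assumes \<phi>: "is_endo smul \<phi>" and nil: "\<phi> ^^ k = (\<lambda>_. 0)"
    and U: "UNIV = range \<phi> + span smul UNIV (set U)"
    and \<psi>: "\<psi>1 \<in> centralizer smul \<phi>" "\<psi>2 \<in> centralizer smul \<phi>"
    and A: "mat_represents smul H U A \<psi>1" "mat_represents smul H U A \<psi>2"
  shows "\<psi>1 = \<psi>2"
proof (rule centralizer_eq_on_complement[OF \<phi> nil U \<psi>])
  fix u assume "u \<in> set U"
  then obtain j where "j < length U" "u = U ! j" by (metis in_set_conv_nth)
  then show "\<psi>1 u = \<psi>2 u" using A unfolding mat_represents_def by simp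
qed

lemma centralizer_image_of_poly_mats:
  assumes \<phi>: "is_endo smul \<phi>" and nil: "\<phi> ^^ k = (\<lambda>_. 0)"
    and H: "span smul UNIV (set H) = UNIV" "length H \<le> d"
    and U: "UNIV = range \<phi> + span smul UNIV (set U)" "length U \<le> m"
  shows "\<exists>gs :: (nat \<Rightarrow> nat \<Rightarrow> 'r poly) list. length gs = m * d \<and> set gs \<subseteq> poly_mats m \<and>
    (\<exists>N. N \<subseteq> span mat_smul UNIV (set gs) \<and> is_submod mat_smul ring_center N \<and>
      (\<exists>f. (\<forall>x\<in>N. \<forall>y\<in>N. f (x + y) = f x + f y) \<and>
           (\<forall>z\<in>ring_center. \<forall>x\<in>N. f (mat_smul z x) = hom_smul smul z (f x)) \<and>
           f ` N = centralizer smul \<phi>))"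
proof -
  define gs :: "(nat \<Rightarrow> nat \<Rightarrow> 'r poly) list"
    where "gs = map (\<lambda>(j, i). unit_poly_mat j i) (List.product [0..<m] [0..<d])"
  have gs: "length gs = m * d" "set gs \<subseteq> poly_mats m"
    unfolding gs_def by (auto simp: unit_poly_mat_in_poly_mats)
  have gs_set: "set gs = {unit_poly_mat j i | j i. j < m \<and> i < d}"
    unfolding gs_def by auto blast
  have V: "is_submod mat_smul ring_center (span mat_smul UNIV (set gs))"
    by (rule is_submod_subset_scalars[OF span_is_submod subset_UNIV])
  have total: "\<And>\<psi>. \<psi> \<in> centralizer smul \<phi> \<Longrightarrow> \<exists>A\<in>span mat_smul UNIV (set gs). mat_represents smul H U A \<psi>"
    using exists_representing_mat[OF H(1) U(2) H(2)] unfolding gs_set by blast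
  have "\<exists>N\<subseteq>span mat_smul UNIV (set gs). is_submod mat_smul ring_center N \<and>
      (\<exists>f. (\<forall>x\<in>N. \<forall>y\<in>N. f (x + y) = f x + f y) \<and>
           (\<forall>z\<in>ring_center. \<forall>x\<in>N. f (mat_smul z x) = hom_smul smul z (f x)) \<and>
           f ` N = centralizer smul \<phi>)"
  proof (rule linear_relation_image[where act = mat_smul and act' = "hom_smul smul" and S = ring_center
        and V = "span mat_smul UNIV (set gs)" and C = "centralizer smul \<phi>" and P = "mat_represents smul H U"])
    show "is_submod (hom_smul smul) ring_center (centralizer smul \<phi>)"
      by (rule centralizer_is_submod[OF \<phi>])
    show "\<And>z A \<psi>. z \<in> ring_center \<Longrightarrow> mat_represents smul H U A \<psi> \<Longrightarrow>
        mat_represents smul H U (mat_smul z A) (hom_smul smul z \<psi>)"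
      by (rule mat_represents_smul)
    show "\<And>A \<psi> \<psi>'. \<psi> \<in> centralizer smul \<phi> \<Longrightarrow> \<psi>' \<in> centralizer smul \<phi> \<Longrightarrow>
        mat_represents smul H U A \<psi> \<Longrightarrow> mat_represents smul H U A \<psi>' \<Longrightarrow> \<psi> = \<psi>'"
      by (rule mat_represents_unique[OF \<phi> nil U(1)])
  qed (fact V mat_represents_zero mat_represents_add total)+
  then show ?thesis using gs by blast
qed

end

theorem theorem4p6:
  fixes smul :: "'r::ring_1 \<Rightarrow> 'm::ab_group_add \<Rightarrow> 'm"
    and \<phi> :: "'m \<Rightarrow> 'm"
  assumes "left_module smul"
    and "fin_gen smul"
    and "semisimple smul"
    and "is_endo smul \<phi>"
    and "\<exists>k. \<phi> ^^ k = (\<lambda>_. 0)"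
  shows "let d = mod_length smul UNIV; m = mod_length smul {x. \<phi> x = 0} in
    \<exists>gs :: (nat \<Rightarrow> nat \<Rightarrow> 'r poly) list. length gs = m * d \<and> set gs \<subseteq> poly_mats m \<and>
    (\<exists>N. N \<subseteq> span mat_smul UNIV (set gs) \<and> is_submod mat_smul ring_center N \<and>
      (\<exists>f. (\<forall>x\<in>N. \<forall>y\<in>N. f (x + y) = f x + f y) \<and>
           (\<forall>z\<in>ring_center. \<forall>x\<in>N. f (mat_smul z x) = hom_smul smul z (f x)) \<and>
           f ` N = centralizer smul \<phi>))"
proof -
  interpret left_mod smul by (rule left_mod.intro) (rule assms(1))
  obtain k where nil: "\<phi> ^^ k = (\<lambda>_. 0)" using assms(5) by blast
  obtain H U where H: "span smul UNIV (set H) = UNIV" "length H = mod_length smul UNIV"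
    and U: "UNIV = range \<phi> + span smul UNIV (set U)" "length U \<le> mod_length smul {x. \<phi> x = 0}"
    using exists_generator_lists[OF assms(2-4)] by blast
  have "length H \<le> mod_length smul UNIV" using H(2) by simp
  from centralizer_image_of_poly_mats[OF assms(4) nil H(1) this U]
  show ?thesis unfolding Let_def .
qed

end
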